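(* Let $M$ be a commutative monoid (written multiplicatively), $n>1$ and $0\le p<q\le n$. The simplicial set $K(M,2)$ satisfies the Beck–Chevalley condition $\mathrm{BC}_{p,q}[n]$ if and only if: for any elements $a_{ijk}\in M$, indexed by $0\le i<j<k\le n$ with $\{p,q\}\not\subset\{i,j,k\}$, satisfying $a_{ikl}a_{ijk}=a_{ijl}a_{jkl}$ for all $0\le i<j<k<l\le n$ with $\{p,q\}\not\subset\{i,j,k,l\}$, there exist elements $x_{ipq}$ ($0\le i<p$), $y_{pjq}$ ($p<j<q$), $z_{pqk}$ ($q<k\le n$) of $M$ satisfying (1) $x_{ipq}a_{ijp}=a_{ijq}x_{jpq}$ for all $0\le i<j<p$; (2) $y_{pkq}a_{pjk}=y_{pjq}a_{jkq}$ for all $p<j<k<q$; (3) $a_{pkl}z_{pqk}=z_{pql}a_{qkl}$ for all $q<k<l\le n$; (4) $x_{ipq}y_{pjq}=a_{ijq}a_{ipj}$ for all $0\le i<p<j<q$; (5) $a_{iqk}x_{ipq}=a_{ipk}z_{pqk}$ for all $0\le i<p<q<k\le n$; (6) $z_{pqk}y_{pjq}=a_{pjk}a_{jqk}$ for all $p<j<q<k\le n$.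
   Context: For a commutative monoid $M$, $K(M,2)$ is the simplicial set whose $n$-simplices are families $(a_{ijk})_{0\le i<j<k\le n}$ of elements of $M$ with $a_{ikl}a_{ijk}=a_{ijl}a_{jkl}$ for all $0\le i<j<k<l\le n$; the $j$-th face map omits all entries involving index $j$ (and reindexes), and degeneracies repeat an index and insert the unit of $M$. The Beck–Chevalley condition $\mathrm{BC}_{p,q}[n]$ on a simplicial set $S$: for any $(n-1)$-simplices $c_p,c_q$ with $d_pc_q=d_{q-1}c_p$ there exists an $n$-simplex $x$ with $d_px=c_p$, $d_qx=c_q$. *)

theory Defs
  imports Main
begin

definition BC :: "(nat \<Rightarrow> 's set) \<Rightarrow> (nat \<Rightarrow> nat \<Rightarrow> 's \<Rightarrow> 's) \<Rightarrow> nat \<Rightarrow> nat \<Rightarrow> nat \<Rightarrow> bool" where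
  "BC S d p q n \<longleftrightarrow>
     (\<forall>cp \<in> S (n - 1). \<forall>cq \<in> S (n - 1).
        d (n - 1) p cq = d (n - 1) (q - 1) cp \<longrightarrow>
        (\<exists>x \<in> S n. d n p x = cp \<and> d n q x = cq))"

text \<open>n-simplices of K(M,2): families a_{ijk}, 0 <= i < j < k <= n, represented as
  functions that are the unit outside the index range (canonical representative).\<close>
definition K2_simplices :: "nat \<Rightarrow> (nat \<Rightarrow> nat \<Rightarrow> nat \<Rightarrow> 'a::comm_monoid_mult) set" where
  "K2_simplices n = {a.
     (\<forall>i j k. \<not> (i < j \<and> j < k \<and> k \<le> n) \<longrightarrow> a i j k = 1) \<and>
     (\<forall>i j k l. i < j \<and> j < k \<and> k < l \<and> l \<le> n \<longrightarrow> a i k l * a i j k = a i j l * a j k l)}"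

definition skip :: "nat \<Rightarrow> nat \<Rightarrow> nat" where
  "skip j m = (if m < j then m else m + 1)"

definition K2_face :: "nat \<Rightarrow> nat \<Rightarrow> (nat \<Rightarrow> nat \<Rightarrow> nat \<Rightarrow> 'a::comm_monoid_mult) \<Rightarrow> (nat \<Rightarrow> nat \<Rightarrow> nat \<Rightarrow> 'a)" where
  "K2_face n j a = (\<lambda>i k l. if i < k \<and> k < l \<and> l \<le> n - 1
                              then a (skip j i) (skip j k) (skip j l) else 1)"

end

theory Submission
  imports Defs
begin

(* The faces d_p x and d_q x of an n-simplex x of K(M,2) retain every entry x_{ijk} except
   the three kinds x_{ipq}, x_{pjq}, x_{pqk} whose index set contains both p and q.  A pair of
   (n-1)-simplices c_p, c_q with d_p c_q = d_{q-1} c_p glues to a family a on the remaining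
   triples satisfying the cocycle identity on every quadruple not containing both p and q, and
   conversely the faces d_p a, d_q a of any such family form such a pair.  Inserting values
   x, y, z for the missing entries gives an n-simplex exactly when the cocycle identities of
   the quadruples containing p and q hold; these come in six kinds, giving equations (1)-(6). *)

definition unskip :: "nat \<Rightarrow> nat \<Rightarrow> nat" where
  "unskip j m = (if m < j then m else m - 1)"

lemma skip_less_skip_iff [simp]: "skip j a < skip j b \<longleftrightarrow> a < b"
  by (auto simp: skip_def)

lemma skip_neq [simp]: "skip j a \<noteq> j" "j \<noteq> skip j a"
  by (auto simp: skip_def)

lemma skip_le: "l \<le> n - 1 \<Longrightarrow> 0 < l \<Longrightarrow> skip j l \<le> n"
  by (auto simp: skip_def)

lemma unskip_skip [simp]: "unskip j (skip j a) = a"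
  by (auto simp: skip_def unskip_def)

lemma skip_unskip: "a \<noteq> j \<Longrightarrow> skip j (unskip j a) = a"
  by (auto simp: skip_def unskip_def)

lemma unskip_less_unskip: "a \<noteq> j \<Longrightarrow> b \<noteq> j \<Longrightarrow> a < b \<Longrightarrow> unskip j a < unskip j b"
  by (auto simp: unskip_def)

lemma unskip_le: "a \<noteq> j \<Longrightarrow> a \<le> n \<Longrightarrow> j \<le> n \<Longrightarrow> unskip j a \<le> n - 1"
  by (auto simp: unskip_def)

lemma skip_skip: "p < q \<Longrightarrow> skip q (skip p m) = skip p (skip (q - 1) m)"
  by (auto simp: skip_def)

lemma unskip_unskip:
  "p < q \<Longrightarrow> m \<noteq> p \<Longrightarrow> m \<noteq> q \<Longrightarrow> unskip p (unskip q m) = unskip (q - 1) (unskip p m)"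
  by (auto simp: unskip_def)

lemma K2_face_apply:
  "i < k \<Longrightarrow> k < l \<Longrightarrow> l \<le> n - 1 \<Longrightarrow> K2_face n j a i k l = a (skip j i) (skip j k) (skip j l)"
  by (simp add: K2_face_def)

lemma K2_face_out_of_range:
  "\<not> (i < k \<and> k < l \<and> l \<le> n - 1) \<Longrightarrow> K2_face n j a i k l = 1"
  unfolding K2_face_def by auto

lemma K2_face_unskip:
  assumes "i < k" "k < l" "l \<le> n" "j \<le> n" "j \<notin> {i, k, l}"
  shows "K2_face n j a (unskip j i) (unskip j k) (unskip j l) = a i k l"
proof -
  have "unskip j i < unskip j k" "unskip j k < unskip j l" "unskip j l \<le> n - 1"
    using assms unskip_le[of l j n] by (auto intro: unskip_less_unskip)
  then show ?thesis
    using assms by (simp add: K2_face_apply skip_unskip)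
qed

lemma K2_face_eqD:
  assumes "K2_face n j s = K2_face n j a" "j \<le> n"
    and "i < k" "k < l" "l \<le> n" "j \<notin> {i, k, l}"
  shows "s i k l = a i k l"
  using K2_face_unskip[of i k l n j s] K2_face_unskip[of i k l n j a] assms by simp

lemma K2_face_cong:
  assumes "\<And>i k l. i < k \<Longrightarrow> k < l \<Longrightarrow> l \<le> n \<Longrightarrow> j \<notin> {i, k, l} \<Longrightarrow> a i k l = b i k l"
  shows "K2_face n j a = K2_face n j b"
proof (intro ext)
  fix i k l
  show "K2_face n j a i k l = K2_face n j b i k l"
    using assms[of "skip j i" "skip j k" "skip j l"] skip_le[of l n j]
    by (cases "i < k \<and> k < l \<and> l \<le> n - 1") (auto simp: K2_face_apply K2_face_out_of_range)
qed

lemma K2_face_face: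
  assumes "p < q"
  shows "K2_face (n - 1) p (K2_face n q a) = K2_face (n - 1) (q - 1) (K2_face n p a)"
proof (intro ext)
  fix i k l
  show "K2_face (n - 1) p (K2_face n q a) i k l = K2_face (n - 1) (q - 1) (K2_face n p a) i k l"
    using assms skip_le[of l "n - 1" p] skip_le[of l "n - 1" "q - 1"]
    by (cases "i < k \<and> k < l \<and> l \<le> n - 1 - 1")
      (auto simp: K2_face_apply K2_face_out_of_range skip_skip)
qed

lemma K2_face_simplex:
  assumes "\<And>i k l m. i < k \<Longrightarrow> k < l \<Longrightarrow> l < m \<Longrightarrow> m \<le> n \<Longrightarrow> j \<notin> {i, k, l, m} \<Longrightarrow>
      a i l m * a i k l = a i k m * a k l m"
  shows "K2_face n j a \<in> K2_simplices (n - 1)"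
  unfolding K2_simplices_def
proof (intro CollectI conjI allI impI)
  fix i k l
  assume "\<not> (i < k \<and> k < l \<and> l \<le> n - 1)"
  then show "K2_face n j a i k l = 1" by (rule K2_face_out_of_range)
next
  fix i k l m
  assume "i < k \<and> k < l \<and> l < m \<and> m \<le> n - 1"
  then show "K2_face n j a i l m * K2_face n j a i k l = K2_face n j a i k m * K2_face n j a k l m"
    using assms[of "skip j i" "skip j k" "skip j l" "skip j m"] skip_le[of m n j]
    by (simp add: K2_face_apply)
qed

lemma K2_face_eqI:
  assumes c: "c \<in> K2_simplices (n - 1)"
    and agree: "\<And>i k l. i < k \<Longrightarrow> k < l \<Longrightarrow> l \<le> n \<Longrightarrow> j \<notin> {i, k, l} \<Longrightarrow>
      a i k l = c (unskip j i) (unskip j k) (unskip j l)"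
  shows "K2_face n j a = c"
proof (intro ext)
  fix i k l
  show "K2_face n j a i k l = c i k l"
  proof (cases "i < k \<and> k < l \<and> l \<le> n - 1")
    case True
    then show ?thesis
      using agree[of "skip j i" "skip j k" "skip j l"] skip_le[of l n j] by (simp add: K2_face_apply)
  next
    case False
    then show ?thesis
      using c by (simp add: K2_face_out_of_range K2_simplices_def)
  qed
qed

lemma K2_cocycle_avoiding_unskip:
  assumes c: "c \<in> K2_simplices (n - 1)" and "j \<le> n"
    and agree: "\<And>i k l. i < k \<Longrightarrow> k < l \<Longrightarrow> l \<le> n \<Longrightarrow> j \<notin> {i, k, l} \<Longrightarrow>
      a i k l = c (unskip j i) (unskip j k) (unskip j l)"
    and "i < k" "k < l" "l < m" "m \<le> n" "j \<notin> {i, k, l, m}"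
  shows "a i l m * a i k l = a i k m * a k l m"
proof -
  have "unskip j i < unskip j k" "unskip j k < unskip j l" "unskip j l < unskip j m"
      "unskip j m \<le> n - 1"
    using assms unskip_le[of m j n] by (auto intro: unskip_less_unskip)
  then show ?thesis
    using c assms by (simp add: agree K2_simplices_def)
qed

definition K2_cocycle_outside :: "nat \<Rightarrow> nat \<Rightarrow> nat \<Rightarrow> (nat \<Rightarrow> nat \<Rightarrow> nat \<Rightarrow> 'a::comm_monoid_mult) \<Rightarrow> bool"
  where "K2_cocycle_outside n p q a \<longleftrightarrow>
    (\<forall>i j k l. i < j \<and> j < k \<and> k < l \<and> l \<le> n \<and> \<not> ({p, q} \<subseteq> {i, j, k, l}) \<longrightarrow>
       a i k l * a i j k = a i j l * a j k l)"

lemma K2_compatible_faces_agree: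
  assumes "p < q" "q \<le> n"
    and compat: "K2_face (n - 1) p cq = K2_face (n - 1) (q - 1) cp"
    and "i < k" "k < l" "l \<le> n" "p \<notin> {i, k, l}" "q \<notin> {i, k, l}"
  shows "cq (unskip q i) (unskip q k) (unskip q l) = cp (unskip p i) (unskip p k) (unskip p l)"
proof -
  have "unskip q i < unskip q k" "unskip q k < unskip q l" "unskip q l \<le> n - 1"
    using assms(2,4-8) unskip_le[of l q n] by (auto intro: unskip_less_unskip)
  moreover have "p \<notin> {unskip q i, unskip q k, unskip q l}"
    using assms(1,7,8) by (auto simp: unskip_def)
  ultimately have "cq (unskip q i) (unskip q k) (unskip q l)
      = K2_face (n - 1) p cq (unskip p (unskip q i)) (unskip p (unskip q k)) (unskip p (unskip q l))"
    using assms(1,2) by (simp add: K2_face_unskip)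
  also have "\<dots> = K2_face (n - 1) (q - 1) cp
      (unskip (q - 1) (unskip p i)) (unskip (q - 1) (unskip p k)) (unskip (q - 1) (unskip p l))"
    using assms(1,7,8) compat by (simp add: unskip_unskip)
  also have "\<dots> = cp (unskip p i) (unskip p k) (unskip p l)"
  proof -
    have "unskip p i < unskip p k" "unskip p k < unskip p l" "unskip p l \<le> n - 1"
      using assms(1,2,4-8) unskip_le[of l p n] by (auto intro: unskip_less_unskip)
    moreover have "q - 1 \<notin> {unskip p i, unskip p k, unskip p l}"
      using assms(1,7,8) by (auto simp: unskip_def)
    ultimately show ?thesis
      using assms(1,2) by (simp add: K2_face_unskip)
  qed
  finally show ?thesis .
qed

lemma K2_glue:
  assumes "p < q" "q \<le> n"
    and cp: "cp \<in> K2_simplices (n - 1)" and cq: "cq \<in> K2_simplices (n - 1)"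
    and compat: "K2_face (n - 1) p cq = K2_face (n - 1) (q - 1) cp"
  obtains a where "K2_cocycle_outside n p q a" "K2_face n p a = cp" "K2_face n q a = cq"
proof -
  define a where "a i k l =
    (if p \<notin> {i, k, l} then cp (unskip p i) (unskip p k) (unskip p l)
     else cq (unskip q i) (unskip q k) (unskip q l))" for i k l
  have agree_p: "a i k l = cp (unskip p i) (unskip p k) (unskip p l)" if "p \<notin> {i, k, l}" for i k l
    using that by (simp add: a_def)
  have agree_q: "a i k l = cq (unskip q i) (unskip q k) (unskip q l)"
    if "i < k" "k < l" "l \<le> n" "q \<notin> {i, k, l}" for i k l
  proof (cases "p \<in> {i, k, l}")
    case True
    then show ?thesis by (simp add: a_def)
  next
    case False
    then show ?thesis
      using K2_compatible_faces_agree[OF assms(1,2) compat that(1-3) False that(4)] by (simp add: a_def)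
  qed
  show ?thesis
  proof
    show "K2_cocycle_outside n p q a"
      unfolding K2_cocycle_outside_def
    proof (intro allI impI)
      fix i j k l
      assume h: "i < j \<and> j < k \<and> k < l \<and> l \<le> n \<and> \<not> {p, q} \<subseteq> {i, j, k, l}"
      show "a i k l * a i j k = a i j l * a j k l"
      proof (cases "p \<in> {i, j, k, l}")
        case False
        then show ?thesis
          using h assms(1,2) by (intro K2_cocycle_avoiding_unskip[OF cp, of p] agree_p) auto
      next
        case True
        then show ?thesis
          using h assms(1,2) by (intro K2_cocycle_avoiding_unskip[OF cq, of q] agree_q) auto
      qed
    qed
    show "K2_face n p a = cp"
      by (rule K2_face_eqI[OF cp agree_p])
    show "K2_face n q a = cq"
      by (rule K2_face_eqI[OF cq agree_q])
  qed
qed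

definition K2_filler_eqns ::
    "nat \<Rightarrow> nat \<Rightarrow> nat \<Rightarrow> (nat \<Rightarrow> nat \<Rightarrow> nat \<Rightarrow> 'a::comm_monoid_mult) \<Rightarrow>
     (nat \<Rightarrow> 'a) \<Rightarrow> (nat \<Rightarrow> 'a) \<Rightarrow> (nat \<Rightarrow> 'a) \<Rightarrow> bool"
  where "K2_filler_eqns n p q a x y z \<longleftrightarrow>
    (\<forall>i j. i < j \<and> j < p \<longrightarrow> x i * a i j p = a i j q * x j) \<and>
    (\<forall>j k. p < j \<and> j < k \<and> k < q \<longrightarrow> y k * a p j k = y j * a j k q) \<and>
    (\<forall>k l. q < k \<and> k < l \<and> l \<le> n \<longrightarrow> a p k l * z k = z l * a q k l) \<and>
    (\<forall>i j. i < p \<and> p < j \<and> j < q \<longrightarrow> x i * y j = a i j q * a i p j) \<and>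
    (\<forall>i k. i < p \<and> q < k \<and> k \<le> n \<longrightarrow> a i q k * x i = a i p k * z k) \<and>
    (\<forall>j k. p < j \<and> j < q \<and> q < k \<and> k \<le> n \<longrightarrow> z k * y j = a p j k * a j q k)"

definition K2_fill ::
    "nat \<Rightarrow> nat \<Rightarrow> nat \<Rightarrow> (nat \<Rightarrow> nat \<Rightarrow> nat \<Rightarrow> 'a::one) \<Rightarrow>
     (nat \<Rightarrow> 'a) \<Rightarrow> (nat \<Rightarrow> 'a) \<Rightarrow> (nat \<Rightarrow> 'a) \<Rightarrow> nat \<Rightarrow> nat \<Rightarrow> nat \<Rightarrow> 'a"
  where "K2_fill n p q a x y z i j k =
    (if \<not> (i < j \<and> j < k \<and> k \<le> n) then 1
     else if j = p \<and> k = q then x i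
     else if i = p \<and> k = q then y j
     else if i = p \<and> j = q then z k
     else a i j k)"

lemma K2_fill_eq:
  "i < j \<Longrightarrow> j < k \<Longrightarrow> k \<le> n \<Longrightarrow> \<not> {p, q} \<subseteq> {i, j, k} \<Longrightarrow> K2_fill n p q a x y z i j k = a i j k"
  by (auto simp: K2_fill_def)

lemma K2_fill_simplex:
  assumes "p < q" and a: "K2_cocycle_outside n p q a" and xyz: "K2_filler_eqns n p q a x y z"
  shows "K2_fill n p q a x y z \<in> K2_simplices n"
  unfolding K2_simplices_def
proof (intro CollectI conjI allI impI)
  fix i j k
  assume "\<not> (i < j \<and> j < k \<and> k \<le> n)"
  then show "K2_fill n p q a x y z i j k = 1" by (simp add: K2_fill_def)
next
  fix i j k l
  assume h: "i < j \<and> j < k \<and> k < l \<and> l \<le> n"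
  let ?s = "K2_fill n p q a x y z"
  show "?s i k l * ?s i j k = ?s i j l * ?s j k l"
  proof (cases "{p, q} \<subseteq> {i, j, k, l}")
    case False
    then have "?s i k l = a i k l" "?s i j k = a i j k" "?s i j l = a i j l" "?s j k l = a j k l"
      using h by (auto intro!: K2_fill_eq)
    then show ?thesis
      using h a False by (simp add: K2_cocycle_outside_def)
  next
    case True
    then consider "i = p" "j = q" | "i = p" "k = q" | "i = p" "l = q" | "j = p" "k = q"
      | "j = p" "l = q" | "k = p" "l = q"
      using h \<open>p < q\<close> by auto
    then show ?thesis
      using h xyz unfolding K2_filler_eqns_def by cases (simp_all add: K2_fill_def mult.commute)
  qed
qed

lemma K2_simplex_filler_eqns:
  assumes s: "s \<in> K2_simplices n" and "p < q" "q \<le> n"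
    and agree: "\<And>i j k. i < j \<Longrightarrow> j < k \<Longrightarrow> k \<le> n \<Longrightarrow> \<not> {p, q} \<subseteq> {i, j, k} \<Longrightarrow> s i j k = a i j k"
  shows "K2_filler_eqns n p q a (\<lambda>i. s i p q) (\<lambda>j. s p j q) (\<lambda>k. s p q k)"
proof -
  have cocycle: "s i k l * s i j k = s i j l * s j k l" if "i < j" "j < k" "k < l" "l \<le> n" for i j k l
    using s that unfolding K2_simplices_def by blast
  show ?thesis
    unfolding K2_filler_eqns_def
  proof (intro conjI allI impI)
    fix i j assume "i < j \<and> j < p"
    then show "s i p q * a i j p = a i j q * s j p q"
      using cocycle[of i j p q] agree[of i j p] agree[of i j q] assms(2,3) by auto
  next
    fix j k assume "p < j \<and> j < k \<and> k < q"
    then show "s p k q * a p j k = s p j q * a j k q"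
      using cocycle[of p j k q] agree[of p j k] agree[of j k q] assms(2,3) by auto
  next
    fix k l assume "q < k \<and> k < l \<and> l \<le> n"
    then show "a p k l * s p q k = s p q l * a q k l"
      using cocycle[of p q k l] agree[of p k l] agree[of q k l] assms(2,3) by auto
  next
    fix i j assume "i < p \<and> p < j \<and> j < q"
    then show "s i p q * s p j q = a i j q * a i p j"
      using cocycle[of i p j q] agree[of i j q] agree[of i p j] assms(2,3) by (auto simp: mult.commute)
  next
    fix i k assume "i < p \<and> q < k \<and> k \<le> n"
    then show "a i q k * s i p q = a i p k * s p q k"
      using cocycle[of i p q k] agree[of i q k] agree[of i p k] assms(2,3) by auto
  next
    fix j k assume "p < j \<and> j < q \<and> q < k \<and> k \<le> n"
    then show "s p q k * s p j q = a p j k * a j q k"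
      using cocycle[of p j q k] agree[of p j k] agree[of j q k] assms(2,3) by auto
  qed
qed

lemma K2_filler_eqns_if_BC:
  fixes a :: "nat \<Rightarrow> nat \<Rightarrow> nat \<Rightarrow> 'a::comm_monoid_mult"
  assumes BC: "BC (K2_simplices :: nat \<Rightarrow> (nat \<Rightarrow> nat \<Rightarrow> nat \<Rightarrow> 'a) set) K2_face p q n"
    and "p < q" "q \<le> n" and a: "K2_cocycle_outside n p q a"
  shows "\<exists>x y z. K2_filler_eqns n p q a x y z"
proof -
  have face_p: "K2_face n p a \<in> K2_simplices (n - 1)"
    by (rule K2_face_simplex) (use a in \<open>auto simp: K2_cocycle_outside_def\<close>)
  have face_q: "K2_face n q a \<in> K2_simplices (n - 1)"
    by (rule K2_face_simplex) (use a in \<open>auto simp: K2_cocycle_outside_def\<close>)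
  obtain s where s: "s \<in> K2_simplices n"
      "K2_face n p s = K2_face n p a" "K2_face n q s = K2_face n q a"
    using BC[unfolded BC_def, rule_format, OF face_p face_q K2_face_face[OF \<open>p < q\<close>]] by blast
  have "s i j k = a i j k" if ijk: "i < j" "j < k" "k \<le> n" and "\<not> {p, q} \<subseteq> {i, j, k}" for i j k
  proof (cases "p \<in> {i, j, k}")
    case True
    with \<open>\<not> {p, q} \<subseteq> {i, j, k}\<close> have "q \<notin> {i, j, k}" by blast
    then show ?thesis using K2_face_eqD[OF s(3) \<open>q \<le> n\<close> ijk] by blast
  next
    case False
    then show ?thesis using K2_face_eqD[OF s(2) _ ijk] assms(2,3) by simp
  qed
  then show ?thesis
    using K2_simplex_filler_eqns[OF s(1) assms(2,3)] by blast
qed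

lemma BC_K2_if_filler_eqns:
  assumes "p < q" "q \<le> n"
    and fillers: "\<And>a :: nat \<Rightarrow> nat \<Rightarrow> nat \<Rightarrow> 'a::comm_monoid_mult.
      K2_cocycle_outside n p q a \<Longrightarrow> \<exists>x y z. K2_filler_eqns n p q a x y z"
  shows "BC (K2_simplices :: nat \<Rightarrow> (nat \<Rightarrow> nat \<Rightarrow> nat \<Rightarrow> 'a) set) K2_face p q n"
  unfolding BC_def
proof (intro ballI impI)
  fix cp cq :: "nat \<Rightarrow> nat \<Rightarrow> nat \<Rightarrow> 'a"
  assume "cp \<in> K2_simplices (n - 1)" "cq \<in> K2_simplices (n - 1)"
    and "K2_face (n - 1) p cq = K2_face (n - 1) (q - 1) cp"
  then obtain a where a: "K2_cocycle_outside n p q a" "K2_face n p a = cp" "K2_face n q a = cq"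
    by (rule K2_glue[OF assms(1,2)])
  then obtain x y z where "K2_filler_eqns n p q a x y z"
    using fillers by blast
  then have "K2_fill n p q a x y z \<in> K2_simplices n"
    using K2_fill_simplex[OF \<open>p < q\<close> a(1)] by blast
  moreover have "K2_face n j (K2_fill n p q a x y z) = K2_face n j a" if "j \<in> {p, q}" for j
    using that by (intro K2_face_cong K2_fill_eq) auto
  ultimately show "\<exists>s \<in> K2_simplices n. K2_face n p s = cp \<and> K2_face n q s = cq"
    using a by auto
qed

theorem mainTheorem9:
  fixes n p q :: nat
  assumes "n > 1" and "p < q" and "q \<le> n"
  shows "BC (K2_simplices :: nat \<Rightarrow> (nat \<Rightarrow> nat \<Rightarrow> nat \<Rightarrow> 'a::comm_monoid_mult) set) K2_face p q n \<longleftrightarrow>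
    (\<forall>a :: nat \<Rightarrow> nat \<Rightarrow> nat \<Rightarrow> 'a.
       (\<forall>i j k l. i < j \<and> j < k \<and> k < l \<and> l \<le> n \<and> \<not> ({p, q} \<subseteq> {i, j, k, l}) \<longrightarrow>
          a i k l * a i j k = a i j l * a j k l) \<longrightarrow>
       (\<exists>x y z :: nat \<Rightarrow> 'a.
          (\<forall>i j. i < j \<and> j < p \<longrightarrow> x i * a i j p = a i j q * x j) \<and>
          (\<forall>j k. p < j \<and> j < k \<and> k < q \<longrightarrow> y k * a p j k = y j * a j k q) \<and>
          (\<forall>k l. q < k \<and> k < l \<and> l \<le> n \<longrightarrow> a p k l * z k = z l * a q k l) \<and>
          (\<forall>i j. i < p \<and> p < j \<and> j < q \<longrightarrow> x i * y j = a i j q * a i p j) \<and>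
          (\<forall>i k. i < p \<and> q < k \<and> k \<le> n \<longrightarrow> a i q k * x i = a i p k * z k) \<and>
          (\<forall>j k. p < j \<and> j < q \<and> q < k \<and> k \<le> n \<longrightarrow> z k * y j = a p j k * a j q k)))"
  unfolding K2_cocycle_outside_def[symmetric] K2_filler_eqns_def[symmetric]
proof
  assume "BC (K2_simplices :: nat \<Rightarrow> (nat \<Rightarrow> nat \<Rightarrow> nat \<Rightarrow> 'a) set) K2_face p q n"
  then show "\<forall>a :: nat \<Rightarrow> nat \<Rightarrow> nat \<Rightarrow> 'a.
      K2_cocycle_outside n p q a \<longrightarrow> (\<exists>x y z. K2_filler_eqns n p q a x y z)"
    using K2_filler_eqns_if_BC assms(2,3) by blast
next
  assume "\<forall>a :: nat \<Rightarrow> nat \<Rightarrow> nat \<Rightarrow> 'a.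
      K2_cocycle_outside n p q a \<longrightarrow> (\<exists>x y z. K2_filler_eqns n p q a x y z)"
  then show "BC (K2_simplices :: nat \<Rightarrow> (nat \<Rightarrow> nat \<Rightarrow> nat \<Rightarrow> 'a) set) K2_face p q n"
    using BC_K2_if_filler_eqns assms(2,3) by blast
qed

end
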